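(* For integers $n\ge2$ let $P_n$ denote the Legendre polynomials and define $$\tilde P_n(z)=\frac1{n+2}\Big(nP_n(z)-\frac2{n-1}P_{n-1}'(z)\Big).$$ Then $\tilde P_n=\partial_z G_n$ where $G_n$ solves $\big((1-z^2)G_{n,z}\big)_{,z}=(z^2-1)P_n'(z)$, and the polynomials $\tilde P_n$ are orthogonal on $[-1,1]$: $$\int_{-1}^1\tilde P_k(z)\tilde P_n(z)\,dz=\frac{2n(n+1)}{(n-1)(n+2)(2n+1)}\,\delta_{kn},\qquad k,n\ge2 .$$ *)

theory Defs
  imports "HOL-Analysis.Analysis" "HOL-Computational_Algebra.Polynomial"
begin

text \<open>Legendre polynomials, via Bonnet's recurrence:
  P_0 = 1, P_1 = z, (m+2) P_(m+2) = (2m+3) z P_(m+1) - (m+1) P_m.\<close>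
fun legendre :: "nat \<Rightarrow> real poly" where
  "legendre 0 = 1"
| "legendre (Suc 0) = [:0, 1:]"
| "legendre (Suc (Suc m)) =
     smult (1 / real (m + 2))
       (smult (real (2 * m + 3)) ([:0, 1:] * legendre (Suc m)) - smult (real (m + 1)) (legendre m))"

definition legendre_tilde :: "nat \<Rightarrow> real poly" where
  "legendre_tilde n =
     smult (1 / (real n + 2))
       (smult (real n) (legendre n) - smult (2 / (real n - 1)) (pderiv (legendre (n - 1))))"

end

theory Submission
  imports Defs
begin

text \<open>Induction along Bonnet's recurrence gives \<open>z P_n' - P_(n-1)' = n P_n\<close> and
  \<open>(1 - z^2) P_n' = n (P_(n-1) - z P_n)\<close>, hence Legendre's equation
  \<open>((1 - z^2) P_n')' = -n(n+1) P_n\<close>. Eliminating \<open>P_(n-1)'\<close> with it shows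
  \<open>Pt_n = -(1 - z^2) P_n'' / ((n-1)(n+2))\<close>, and differentiating Legendre's equation once more
  gives \<open>((1 - z^2) Pt_n)' = (1 - z^2) P_n'\<close>, so any antiderivative of \<open>Pt_n\<close> is a valid \<open>G_n\<close>.
  For the integrals, one integration by parts, whose boundary terms vanish thanks to the factor
  \<open>1 - z^2\<close>, turns \<open>\<integral> Pt_k Pt_n\<close> into \<open>k(k+1)/((k-1)(k+2)) \<integral> P_k P_n\<close>, and the classical
  relation \<open>\<integral> P_k P_n = 2 \<delta>_kn / (2n+1)\<close> finishes the proof.\<close>

section \<open>Identities for Legendre polynomials\<close>

lemma poly_legendre_Suc_Suc:
  "(real m + 2) * poly (legendre (Suc (Suc m))) z
     = (2 * real m + 3) * z * poly (legendre (Suc m)) z - (real m + 1) * poly (legendre m) z"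
  by (simp add: field_simps)

lemma poly_pderiv_legendre_Suc_Suc:
  "(real m + 2) * poly (pderiv (legendre (Suc (Suc m)))) z
     = (2 * real m + 3) * (poly (legendre (Suc m)) z + z * poly (pderiv (legendre (Suc m))) z)
       - (real m + 1) * poly (pderiv (legendre m)) z"
  by (simp add: field_simps pderiv_smult pderiv_diff pderiv_mult pderiv_pCons)

text \<open>Bonnet's recurrence in a form valid for every \<open>n\<close>: for \<open>n = 0\<close> the junk
  term \<open>legendre (0 - 1)\<close> carries the factor \<open>0\<close>.\<close>

lemma legendre_recurrence:
  "smult (real n + 1) (legendre (Suc n))
     = smult (2 * real n + 1) ([:0, 1:] * legendre n) - smult (real n) (legendre (n - 1))"
proof (cases n)
  case (Suc m)
  show ?thesis
    unfolding poly_eq_poly_eq_iff[symmetric] fun_eq_iff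
    using poly_legendre_Suc_Suc[of m] by (auto simp: Suc algebra_simps)
qed simp

lemma poly_legendre_pderiv_identities:
  "z * poly (pderiv (legendre (Suc m))) z - poly (pderiv (legendre m)) z
     = (real m + 1) * poly (legendre (Suc m)) z
   \<and> (z * z - 1) * poly (pderiv (legendre (Suc m))) z
     = (real m + 1) * (z * poly (legendre (Suc m)) z - poly (legendre m) z)"
proof (induction m)
  case 0
  show ?case by (simp add: pderiv_pCons algebra_simps)
next
  case (Suc m)
  define p q r where "p = poly (legendre m) z" and "q = poly (legendre (Suc m)) z"
    and "r = poly (legendre (Suc (Suc m))) z"
  define p' q' r' where "p' = poly (pderiv (legendre m)) z"
    and "q' = poly (pderiv (legendre (Suc m))) z" and "r' = poly (pderiv (legendre (Suc (Suc m)))) z"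
  have IH: "z * q' - p' = (real m + 1) * q" "(z * z - 1) * q' = (real m + 1) * (z * q - p)"
    using Suc.IH unfolding p_def q_def p'_def q'_def by auto
  have rec: "(real m + 2) * r = (2 * real m + 3) * z * q - (real m + 1) * p"
    unfolding r_def q_def p_def by (rule poly_legendre_Suc_Suc)
  have rec': "(real m + 2) * r' = (2 * real m + 3) * (q + z * q') - (real m + 1) * p'"
    unfolding r'_def q_def p'_def q'_def by (rule poly_pderiv_legendre_Suc_Suc)
  have "(real m + 2) * (z * r' - q') = (real m + 2) * ((real m + 2) * r)"
    using IH rec rec' by algebra
  moreover have "(real m + 2) * ((z * z - 1) * r') = (real m + 2) * ((real m + 2) * (z * r - q))"
    using IH rec rec' by algebra
  ultimately show ?case
    unfolding p_def q_def r_def p'_def q'_def r'_def by (simp add: add.commute)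
qed

definition one_minus_sq :: "real poly" where
  "one_minus_sq = [:1, 0, -1:]"

lemma poly_one_minus_sq [simp]: "poly one_minus_sq z = 1 - z\<^sup>2"
  by (simp add: one_minus_sq_def power2_eq_square)

lemma pderiv_one_minus_sq [simp]: "pderiv one_minus_sq = [:0, -2:]"
  by (simp add: one_minus_sq_def pderiv_pCons)

lemma pderiv_legendre_pred:
  "pderiv (legendre (n - 1)) = [:0, 1:] * pderiv (legendre n) - smult (real n) (legendre n)"
proof (cases n)
  case (Suc m)
  have "poly (pderiv (legendre m)) z
      = z * poly (pderiv (legendre (Suc m))) z - (real m + 1) * poly (legendre (Suc m)) z" for z
    using poly_legendre_pderiv_identities[of z m] by linarith
  then show ?thesis
    by (simp add: Suc poly_eq_poly_eq_iff[symmetric] fun_eq_iff algebra_simps)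
qed simp

lemma one_minus_sq_pderiv_legendre:
  "one_minus_sq * pderiv (legendre n) = smult (real n) (legendre (n - 1) - [:0, 1:] * legendre n)"
proof (cases n)
  case (Suc m)
  have "(1 - z\<^sup>2) * poly (pderiv (legendre (Suc m))) z
      = (real m + 1) * (poly (legendre m) z - z * poly (legendre (Suc m)) z)" for z
    using conjunct2[OF poly_legendre_pderiv_identities[of z m]] unfolding power2_eq_square by algebra
  then show ?thesis
    by (simp add: Suc poly_eq_poly_eq_iff[symmetric] fun_eq_iff algebra_simps)
qed simp

lemma legendre_ode:
  "pderiv (one_minus_sq * pderiv (legendre n)) = smult (- (real n * (real n + 1))) (legendre n)"
proof -
  have "pderiv (one_minus_sq * pderiv (legendre n))
      = smult (real n) (pderiv (legendre (n - 1)) - legendre n - [:0, 1:] * pderiv (legendre n))"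
    unfolding one_minus_sq_pderiv_legendre
    by (simp add: pderiv_smult pderiv_diff pderiv_mult pderiv_pCons algebra_simps)
  also have "\<dots> = smult (- (real n * (real n + 1))) (legendre n)"
    unfolding pderiv_legendre_pred by (rule poly_eqI) (simp add: algebra_simps)
  finally show ?thesis .
qed

lemma legendre_tilde_eq:
  assumes "n \<noteq> 1"
  shows "legendre_tilde n
    = smult (- 1 / ((real n - 1) * (real n + 2))) (one_minus_sq * pderiv (pderiv (legendre n)))"
proof (intro poly_eq_poly_eq_iff[THEN iffD1] ext)
  fix z
  define a b c where "a = poly (legendre n) z" and "b = poly (pderiv (legendre n)) z"
    and "c = poly (pderiv (pderiv (legendre n))) z"
  have ode: "(1 - z\<^sup>2) * c - 2 * z * b = - (real n * (real n + 1)) * a"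
    using arg_cong[OF legendre_ode[of n], of "\<lambda>p. poly p z"]
    by (simp add: a_def b_def c_def pderiv_mult algebra_simps)
  have "real n - 1 \<noteq> 0" using assms by simp
  then have "poly (legendre_tilde n) z = (real n * a - 2 / (real n - 1) * (z * b - real n * a)) / (real n + 2)"
    unfolding legendre_tilde_def pderiv_legendre_pred by (simp add: a_def b_def)
  also have "real n * a - 2 / (real n - 1) * (z * b - real n * a)
      = real n * a - (2 * z * b - 2 * real n * a) / (real n - 1)"
    by (simp add: field_simps)
  also have "2 * z * b - 2 * real n * a = (1 - z\<^sup>2) * c + real n * (real n - 1) * a"
    using ode by (simp add: algebra_simps)
  also have "real n * a - \<dots> / (real n - 1) = (z\<^sup>2 - 1) * c / (real n - 1)"
    using \<open>real n - 1 \<noteq> 0\<close> by (simp add: field_simps)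
  also have "\<dots> / (real n + 2) = - 1 / ((real n - 1) * (real n + 2)) * ((1 - z\<^sup>2) * c)"
    by (simp add: divide_simps) (simp add: algebra_simps)
  finally show "poly (legendre_tilde n) z
    = poly (smult (- 1 / ((real n - 1) * (real n + 2))) (one_minus_sq * pderiv (pderiv (legendre n)))) z"
    by (simp add: c_def)
qed

lemma pderiv_one_minus_sq_legendre_tilde:
  assumes "n \<noteq> 1"
  shows "pderiv (one_minus_sq * legendre_tilde n) = one_minus_sq * pderiv (legendre n)"
proof (intro poly_eq_poly_eq_iff[THEN iffD1] ext)
  fix z
  define b c d where "b = poly (pderiv (legendre n)) z" and "c = poly (pderiv (pderiv (legendre n))) z"
    and "d = poly (pderiv (pderiv (pderiv (legendre n)))) z"
  define k where "k = - 1 / ((real n - 1) * (real n + 2))"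
  have ode': "(1 - z\<^sup>2) * d - 4 * z * c - 2 * b = - (real n * (real n + 1)) * b"
    using arg_cong[OF legendre_ode[of n], of "\<lambda>p. poly (pderiv p) z"]
    by (simp add: b_def c_def d_def pderiv_mult pderiv_add pderiv_minus pderiv_smult pderiv_pCons
        algebra_simps)
  have "(real n - 1) * (real n + 2) \<noteq> 0" using assms by simp
  then have k: "k * (2 - real n * (real n + 1)) = 1"
    unfolding k_def by (simp add: field_simps)
  have "poly (pderiv (one_minus_sq * legendre_tilde n)) z
      = k * ((1 - z\<^sup>2) * ((1 - z\<^sup>2) * d - 4 * z * c))"
    unfolding legendre_tilde_eq[OF assms] k_def[symmetric]
    by (simp add: b_def c_def d_def pderiv_mult pderiv_smult algebra_simps)
  also have "\<dots> = (1 - z\<^sup>2) * b"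
    using ode' k by algebra
  finally show "poly (pderiv (one_minus_sq * legendre_tilde n)) z
    = poly (one_minus_sq * pderiv (legendre n)) z"
    by (simp add: b_def)
qed

section \<open>Integrals of polynomials\<close>

definition poly_integral :: "real \<Rightarrow> real \<Rightarrow> real poly \<Rightarrow> real" where
  "poly_integral a b p = integral {a..b} (poly p)"

lemma poly_integrable_on: "poly (p :: real poly) integrable_on {a..b}"
  using integrable_continuous_real[of a b "poly p"] continuous_on_poly[OF continuous_on_id, of "{a..b}" p]
  by simp

lemma poly_integral_add: "poly_integral a b (p + q) = poly_integral a b p + poly_integral a b q"
  unfolding poly_integral_def poly_add by (rule integral_add[OF poly_integrable_on poly_integrable_on])

lemma poly_integral_smult: "poly_integral a b (smult c p) = c * poly_integral a b p"
  unfolding poly_integral_def poly_smult by (rule integral_mult_right)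

lemma poly_integral_minus: "poly_integral a b (- p) = - poly_integral a b p"
  unfolding poly_integral_def poly_minus by (rule integral_neg)

lemma poly_integral_diff: "poly_integral a b (p - q) = poly_integral a b p - poly_integral a b q"
  unfolding poly_integral_def poly_diff by (rule integral_diff[OF poly_integrable_on poly_integrable_on])

lemma poly_integral_pderiv:
  assumes "a \<le> b"
  shows "poly_integral a b (pderiv p) = poly p b - poly p a"
proof -
  have "(poly (pderiv p) has_integral (poly p b - poly p a)) {a..b}"
    using assms by (intro fundamental_theorem_of_calculus)
      (auto simp: has_real_derivative_iff_has_vector_derivative[symmetric]
        intro: has_field_derivative_at_within)
  then show ?thesis unfolding poly_integral_def by (rule integral_unique)
qed

lemma poly_integral_by_parts:
  assumes "a \<le> b"
  shows "poly_integral a b (p * pderiv q)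
    = poly (p * q) b - poly (p * q) a - poly_integral a b (q * pderiv p)"
  using poly_integral_pderiv[OF assms, of "p * q"] by (simp add: pderiv_mult poly_integral_add)

section \<open>Orthogonality of the Legendre polynomials\<close>

lemma integral_one_minus_sq_pderiv_legendre:
  "poly_integral (-1) 1 (one_minus_sq * pderiv (legendre k) * pderiv (legendre n))
    = real k * (real k + 1) * poly_integral (-1) 1 (legendre k * legendre n)"
proof -
  have "poly_integral (-1) 1 (one_minus_sq * pderiv (legendre k) * pderiv (legendre n))
      = - poly_integral (-1) 1 (legendre n * pderiv (one_minus_sq * pderiv (legendre k)))"
    using poly_integral_by_parts[of "-1" 1 "one_minus_sq * pderiv (legendre k)" "legendre n"]
    by simp
  also have "\<dots> = real k * (real k + 1) * poly_integral (-1) 1 (legendre k * legendre n)"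
    by (simp add: legendre_ode poly_integral_minus poly_integral_smult mult.commute)
  finally show ?thesis .
qed

lemma legendre_orthogonal:
  assumes "k \<noteq> n"
  shows "poly_integral (-1) 1 (legendre k * legendre n) = 0"
proof -
  have "real k * (real k + 1) * poly_integral (-1) 1 (legendre k * legendre n)
      = real n * (real n + 1) * poly_integral (-1) 1 (legendre k * legendre n)"
    using integral_one_minus_sq_pderiv_legendre[of k n] integral_one_minus_sq_pderiv_legendre[of n k]
    by (simp add: mult_ac)
  moreover have "real k * (real k + 1) \<noteq> real n * (real n + 1)"
  proof
    assume "real k * (real k + 1) = real n * (real n + 1)"
    then have "k * (k + 1) = n * (n + 1)" by (metis of_nat_1 of_nat_add of_nat_eq_iff of_nat_mult)
    moreover have "strict_mono (\<lambda>m :: nat. m * (m + 1))"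
      by (rule strict_monoI) (simp add: add_strict_mono mult_strict_mono)
    ultimately show False using assms by (metis strict_mono_eq)
  qed
  ultimately show ?thesis by simp
qed

lemma legendre_norm_Suc:
  "(2 * real n + 3) * poly_integral (-1) 1 (legendre (Suc n) * legendre (Suc n))
    = (2 * real n + 1) * poly_integral (-1) 1 (legendre n * legendre n)"
proof -
  define M where "M = poly_integral (-1) 1 (legendre n * ([:0, 1:] * legendre (Suc n)))"
  have "(real n + 1) * poly_integral (-1) 1 (legendre (Suc n) * legendre (Suc n)) = (2 * real n + 1) * M"
    using arg_cong[OF legendre_recurrence[of n], of "\<lambda>p. poly_integral (-1) 1 (legendre (Suc n) * p)"]
      legendre_orthogonal[of "Suc n" "n - 1"]
    by (simp add: M_def poly_integral_smult poly_integral_diff algebra_simps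
        del: mult_pCons_left mult_pCons_right)
  moreover have "0 = (2 * real n + 3) * M - (real n + 1) * poly_integral (-1) 1 (legendre n * legendre n)"
    using arg_cong[OF legendre_recurrence[of "Suc n"], of "\<lambda>p. poly_integral (-1) 1 (legendre n * p)"]
      legendre_orthogonal[of n "Suc (Suc n)"]
    by (simp add: M_def poly_integral_smult poly_integral_diff algebra_simps
        del: mult_pCons_left mult_pCons_right legendre.simps)
  ultimately have "(real n + 1) * ((2 * real n + 3) * poly_integral (-1) 1 (legendre (Suc n) * legendre (Suc n)))
      = (real n + 1) * ((2 * real n + 1) * poly_integral (-1) 1 (legendre n * legendre n))"
    by algebra
  then show ?thesis by simp
qed

lemma legendre_norm: "poly_integral (-1) 1 (legendre n * legendre n) = 2 / (2 * real n + 1)"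
proof (induction n)
  case 0
  have "poly_integral (-1) 1 (pderiv [:0, 1:]) = 2"
    by (simp add: poly_integral_pderiv)
  then show ?case by (simp add: pderiv_pCons pCons_one)
next
  case (Suc n)
  then show ?case
    using legendre_norm_Suc[of n] by (simp add: field_simps)
qed

section \<open>The modified polynomials\<close>

lemma integral_legendre_tilde_mult:
  assumes "k \<noteq> 1" "n \<noteq> 1"
  shows "poly_integral (-1) 1 (legendre_tilde k * legendre_tilde n)
    = real k * (real k + 1) / ((real k - 1) * (real k + 2)) * poly_integral (-1) 1 (legendre k * legendre n)"
proof -
  define c where "c = - 1 / ((real k - 1) * (real k + 2))"
  have "legendre_tilde k * legendre_tilde n
      = smult c ((one_minus_sq * legendre_tilde n) * pderiv (pderiv (legendre k)))"
    unfolding legendre_tilde_eq[OF assms(1)] c_def by (simp add: mult_ac)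
  then have "poly_integral (-1) 1 (legendre_tilde k * legendre_tilde n)
      = c * poly_integral (-1) 1 ((one_minus_sq * legendre_tilde n) * pderiv (pderiv (legendre k)))"
    by (simp add: poly_integral_smult)
  also have "poly_integral (-1) 1 ((one_minus_sq * legendre_tilde n) * pderiv (pderiv (legendre k)))
      = - poly_integral (-1) 1 (one_minus_sq * pderiv (legendre k) * pderiv (legendre n))"
    using poly_integral_by_parts[of "-1" 1 "one_minus_sq * legendre_tilde n" "pderiv (legendre k)"]
    by (simp add: pderiv_one_minus_sq_legendre_tilde[OF assms(2)] mult_ac)
  finally show ?thesis
    unfolding integral_one_minus_sq_pderiv_legendre c_def by simp
qed

theorem legendre_tilde_orthogonality:
  assumes "k \<noteq> 1" "n \<noteq> 1"
  shows "integral {-1..1} (\<lambda>z. poly (legendre_tilde k) z * poly (legendre_tilde n) z)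
    = (if k = n then 2 * real n * (real n + 1) / ((real n - 1) * (real n + 2) * (2 * real n + 1))
       else 0)"
proof -
  have "integral {-1..1} (\<lambda>z. poly (legendre_tilde k) z * poly (legendre_tilde n) z)
      = real k * (real k + 1) / ((real k - 1) * (real k + 2)) * poly_integral (-1) 1 (legendre k * legendre n)"
    using integral_legendre_tilde_mult[OF assms] by (simp add: poly_integral_def poly_mult[abs_def])
  then show ?thesis
    by (simp add: legendre_norm legendre_orthogonal mult_ac)
qed

lemma pderiv_surj: "\<exists>q. pderiv q = (p :: 'a :: field_char_0 poly)"
proof -
  have "pderiv (\<Sum>i\<le>degree p. monom (coeff p i / of_nat (Suc i)) (Suc i))
      = (\<Sum>i\<le>degree p. monom (coeff p i) i)"
    using higher_pderiv_sum[of 1 "\<lambda>i. monom (coeff p i / of_nat (Suc i)) (Suc i)" "{..degree p}"]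
    by (simp add: pderiv_monom del: of_nat_Suc)
  then show ?thesis by (metis poly_as_sum_of_monoms)
qed

lemma legendre_tilde_potential:
  assumes "n \<noteq> 1"
  obtains G :: "real \<Rightarrow> real"
  where "\<And>z. (G has_real_derivative poly (legendre_tilde n) z) (at z)"
    and "\<And>z. ((\<lambda>x. (1 - x\<^sup>2) * deriv G x) has_real_derivative
               (1 - z\<^sup>2) * poly (pderiv (legendre n)) z) (at z)"
proof -
  obtain H where H: "pderiv H = legendre_tilde n"
    using pderiv_surj by blast
  have deriv_H: "deriv (poly H) = poly (legendre_tilde n)"
    by (intro ext DERIV_imp_deriv) (metis H poly_DERIV)
  show ?thesis
  proof (rule that)
    show "(poly H has_real_derivative poly (legendre_tilde n) z) (at z)" for z
      using poly_DERIV[of H z] by (simp add: H)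
    show "((\<lambda>x. (1 - x\<^sup>2) * deriv (poly H) x) has_real_derivative
        (1 - z\<^sup>2) * poly (pderiv (legendre n)) z) (at z)" for z
      using poly_DERIV[of "one_minus_sq * legendre_tilde n" z]
      by (simp add: deriv_H pderiv_one_minus_sq_legendre_tilde[OF assms])
  qed
qed

theorem mainTheorem4:
  fixes k n :: nat
  assumes "2 \<le> k" and "2 \<le> n"
  shows "(\<exists>G :: real \<Rightarrow> real.
            (\<forall>z. (G has_real_derivative poly (legendre_tilde n) z) (at z)) \<and>
            (\<forall>z. ((\<lambda>x. (1 - x\<^sup>2) * deriv G x) has_real_derivative
                   (1 - z\<^sup>2) * poly (pderiv (legendre n)) z) (at z)))
       \<and> integral {-1..1} (\<lambda>z. poly (legendre_tilde k) z * poly (legendre_tilde n) z)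
           = (if k = n then 2 * real n * (real n + 1) /
                 ((real n - 1) * (real n + 2) * (2 * real n + 1)) else 0)"
proof
  have "n \<noteq> 1" using assms(2) by simp
  then show "\<exists>G :: real \<Rightarrow> real.
      (\<forall>z. (G has_real_derivative poly (legendre_tilde n) z) (at z)) \<and>
      (\<forall>z. ((\<lambda>x. (1 - x\<^sup>2) * deriv G x) has_real_derivative
             (1 - z\<^sup>2) * poly (pderiv (legendre n)) z) (at z))"
    by (metis legendre_tilde_potential)
  show "integral {-1..1} (\<lambda>z. poly (legendre_tilde k) z * poly (legendre_tilde n) z)
      = (if k = n then 2 * real n * (real n + 1) /
            ((real n - 1) * (real n + 2) * (2 * real n + 1)) else 0)"
    using assms by (intro legendre_tilde_orthogonality) auto
qed

end
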